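(* Consider a Stochastic Non-atomic Congestion Game (SNCG) as described in the context, with a non-atomic agent measure $m$. Let $\bm{\pi}^*$ be a Nash equilibrium joint policy. Then for every global state $s \in \mathcal{S}$, every local state $z \in \mathcal{Z}$ and all agents $i, j \in \mathcal{N}^s_z$, $$v_{iz}(s, \pi^*_{iz}, \bm{\pi}^*_{-i}) = v_{jz}(s, \pi^*_{jz}, \bm{\pi}^*_{-j}),$$ i.e. the values of agents present in the same local state are equal at equilibrium.
   Context: An SNCG is a tuple $\langle \mathcal{N}, \mathcal{Z}, \mathcal{S}, \mathcal{A}, \mathcal{T}, \mathcal{R}\rangle$. The set of agents $\mathcal{N}$ is endowed with a measure space $(\mathcal{N}, \mathcal{M}, m)$, where $m$ is a finite Lebesgue measure with $m(\mathcal{N}) = 1$ that is non-atomic, i.e. $m(\{i\}) = 0$ for every agent $i$. $\mathcal{Z}$ is a finite set of local states. In a global state $s \in \mathcal{S}$, $\mathcal{N}$ is partitioned into disjoint sets $\mathcal{N}^s_z$ ($z \in \mathcal{Z}$), the agents in local state $z$, and $s$ is identified with the mass distribution $\langle m(\mathcal{N}^s_1), \dots, m(\mathcal{N}^s_{|\mathcal{Z}|})\rangle$. Each local state $z$ has an action set $\mathcal{A}_z$, the same for all agents in $z$. A policy of agent $i$ is $\pi_i = (\pi_{iz}(s))_{s, z}$ with $\pi_{iz}(\cdot\mid s)$ a distribution over $\mathcal{A}_z$; $\Pi_z$ is the set of such local policies (the same for every agent). Writing $act(k)$ for the action of agent $k$, $f^a_z(s) = \int_{k\in\mathcal{N}^s_z}\mathbb{1}_{(act(k)=a)}\,dm(k)$,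 the joint action is $\bm{a} = ((f^a_z)_{a})_{z}$, and $\phi^a(s,\bm{a}) = \sum_z f^a_z(s)$ with $\phi(s,\bm{a})$ the vector of these masses. Rewards $\mathcal{R}_z$ depend only on the global state, the local state and these masses (not on agent identities) and are non-increasing continuous in the masses; the transition $\mathcal{T}(s'\mid s,\bm{a})$ of global states depends only on the masses of agents selecting actions. With discount $\gamma$, the value of agent $j$ in local state $z$ is $$v_{jz}(s,\pi_{jz},\bm{\pi}_{-j}) = \mathcal{R}_z\big(s,\phi^{\pi_{jz}(s)}(s,\bm{a})\big) + \gamma\int_{s'}\mathcal{T}(s'\mid s,\bm{a})\,v_{jz'}(s',\pi_{jz'},\bm{\pi}_{-j})\,ds'.$$ A joint policy $\bm{\pi}$ is a Nash equilibrium if $v_{iz}(s,\pi_{iz},\bm{\pi}_{-i}) \ge v_{iz}(s,\pi'_{iz},\bm{\pi}_{-i})$ for all $s\in\mathcal{S}$, $z\in\mathcal{Z}$, $i\in\mathcal{N}^s_z$ and all $\pi'_{iz}\in\Pi_z$. *)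

theory Defs
  imports "HOL-Probability.Probability"
begin

text \<open>Type parameters: 'n agents, 'z local states (finite), 's global states,
  'a actions.  A (local) policy of an agent is a map
  sigma :: 'z => 's => 'a pmf, sigma z s being the distribution over actions
  used in local state z at global state s.  A joint policy is
  pi :: 'n => 'z => 's => 'a pmf.
  loc s k is the local state of agent k in global state s, i.e.
  N^s_z = {k. loc s k = z}.\<close>

definition policies :: "('z \<Rightarrow> 'a set) \<Rightarrow> ('z \<Rightarrow> 's \<Rightarrow> 'a pmf) set" where
  "policies A = {\<sigma>. \<forall>z s. set_pmf (\<sigma> z s) \<subseteq> A z}"

definition mass :: "'n measure \<Rightarrow> ('s \<Rightarrow> 'n \<Rightarrow> 'z) \<Rightarrow> ('n \<Rightarrow> 'z \<Rightarrow> 's \<Rightarrow> 'a pmf)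
    \<Rightarrow> 's \<Rightarrow> 'z \<Rightarrow> 'a \<Rightarrow> real" where
  "mass M loc \<pi> s z a = (LINT k:{k. loc s k = z}|M. pmf (\<pi> k z s) a)"

definition phi :: "'n measure \<Rightarrow> ('s \<Rightarrow> 'n \<Rightarrow> 'z::finite) \<Rightarrow> ('n \<Rightarrow> 'z \<Rightarrow> 's \<Rightarrow> 'a pmf)
    \<Rightarrow> 's \<Rightarrow> 'a \<Rightarrow> real" where
  "phi M loc \<pi> s a = (\<Sum>z\<in>UNIV. mass M loc \<pi> s z a)"

text \<open>Bellman equation for an agent with own policy sigma facing the mass profile
  ph (ph s a = phi^a at s).  R z s x: reward in local state z at s when the mass
  on the chosen action is x.  T s ph: distribution of the next global state.
  Z s z a s': distribution of the agent's next local state (identity-free).\<close>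
definition bellman_sol ::
  "'s measure \<Rightarrow> ('z \<Rightarrow> 's \<Rightarrow> real \<Rightarrow> real) \<Rightarrow> ('s \<Rightarrow> ('a \<Rightarrow> real) \<Rightarrow> 's measure)
   \<Rightarrow> ('s \<Rightarrow> 'z \<Rightarrow> 'a \<Rightarrow> 's \<Rightarrow> 'z pmf) \<Rightarrow> real \<Rightarrow> ('z \<Rightarrow> 's \<Rightarrow> 'a pmf)
   \<Rightarrow> ('s \<Rightarrow> 'a \<Rightarrow> real) \<Rightarrow> ('s \<Rightarrow> 'z \<Rightarrow> real) \<Rightarrow> bool" where
  "bellman_sol S R T Z \<gamma> \<sigma> ph W \<longleftrightarrow>
     (\<exists>B. \<forall>s z. \<bar>W s z\<bar> \<le> B) \<and> (\<forall>z. (\<lambda>s. W s z) \<in> borel_measurable S) \<and>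
     (\<forall>s z. W s z = measure_pmf.expectation (\<sigma> z s)
        (\<lambda>a. R z s (ph s a) + \<gamma> * (\<integral>s'. measure_pmf.expectation (Z s z a s') (\<lambda>z'. W s' z') \<partial>(T s (ph s)))))"

definition own_value where
  "own_value S R T Z \<gamma> \<sigma> ph = (THE W. bellman_sol S R T Z \<gamma> \<sigma> ph W)"

definition sncg_value ::
  "'n measure \<Rightarrow> ('s \<Rightarrow> 'n \<Rightarrow> 'z::finite) \<Rightarrow> 's measure \<Rightarrow> ('z \<Rightarrow> 's \<Rightarrow> real \<Rightarrow> real)
   \<Rightarrow> ('s \<Rightarrow> ('a \<Rightarrow> real) \<Rightarrow> 's measure) \<Rightarrow> ('s \<Rightarrow> 'z \<Rightarrow> 'a \<Rightarrow> 's \<Rightarrow> 'z pmf) \<Rightarrow> real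
   \<Rightarrow> ('n \<Rightarrow> 'z \<Rightarrow> 's \<Rightarrow> 'a pmf) \<Rightarrow> 'n \<Rightarrow> 's \<Rightarrow> 'z \<Rightarrow> real" where
  "sncg_value M loc S R T Z \<gamma> \<pi> i s z = own_value S R T Z \<gamma> (\<pi> i) (phi M loc \<pi>) s z"

definition nash_eq where
  "nash_eq M loc A S R T Z \<gamma> \<pi> \<longleftrightarrow>
     (\<forall>i. \<pi> i \<in> policies A) \<and>
     (\<forall>s z i \<sigma>. loc s i = z \<longrightarrow> \<sigma> \<in> policies A \<longrightarrow>
        sncg_value M loc S R T Z \<gamma> (\<pi>(i := \<sigma>)) i s z \<le> sncg_value M loc S R T Z \<gamma> \<pi> i s z)"

end

theory Submission
  imports Defs
begin

text \<open>A single agent has measure zero, so a unilateral deviation does not change the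
  masses on the actions. Since an agent's value depends on the joint policy only
  through its own policy and these masses, agent i can deviate to agent j's policy
  and obtain exactly j's value; the equilibrium condition for i and for j then gives
  the inequality in both directions.\<close>

lemma borel_measurable_cong_except_point:
  fixes f g :: "'a \<Rightarrow> 'b::topological_space"
  assumes "{x} \<in> sets M" and "\<And>y. y \<noteq> x \<Longrightarrow> f y = g y" and "f \<in> borel_measurable M"
  shows "g \<in> borel_measurable M"
proof -
  have "(\<lambda>y. if y \<in> {x} then g x else f y) \<in> borel_measurable M"
    using assms(1,3) by (intro measurable_If_set) auto
  moreover have "(\<lambda>y. if y \<in> {x} then g x else f y) = g"
    using assms(2) by auto
  ultimately show ?thesis by simp
qed

lemma integral_cong_except_null_point:
  fixes f g :: "'a \<Rightarrow> 'b::{banach, second_countable_topology}"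
  assumes null: "{x} \<in> null_sets M" and eq: "\<And>y. y \<noteq> x \<Longrightarrow> f y = g y"
  shows "integral\<^sup>L M f = integral\<^sup>L M g"
proof -
  have measurable_iff: "f \<in> borel_measurable M \<longleftrightarrow> g \<in> borel_measurable M"
    using borel_measurable_cong_except_point[OF null_setsD2[OF null]] eq by metis
  show ?thesis
  proof (cases "f \<in> borel_measurable M")
    case True
    have "AE y in M. f y = g y"
      by (rule AE_I'[OF null]) (use eq in auto)
    with True measurable_iff show ?thesis
      by (intro integral_cong_AE) simp_all
  next
    case False
    with measurable_iff show ?thesis
      by (metis borel_measurable_integrable not_integrable_integral_eq)
  qed
qed

lemma mass_fun_upd:
  assumes "{i} \<in> null_sets M"
  shows "mass M loc (\<pi>(i := \<sigma>)) = mass M loc \<pi>"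
  unfolding mass_def set_lebesgue_integral_def
  by (intro ext integral_cong_except_null_point[OF assms]) simp

lemma phi_fun_upd:
  assumes "{i} \<in> null_sets M"
  shows "phi M loc (\<pi>(i := \<sigma>)) = phi M loc \<pi>"
  unfolding phi_def mass_fun_upd[OF assms] ..

lemma sncg_value_imitate:
  assumes "{i} \<in> null_sets M"
  shows "sncg_value M loc S R T Z \<gamma> (\<pi>(i := \<pi> j)) i = sncg_value M loc S R T Z \<gamma> \<pi> j"
  unfolding sncg_value_def phi_fun_upd[OF assms] by simp

lemma nash_eq_value_ge:
  assumes NE: "nash_eq M loc A S R T Z \<gamma> \<pi>" and "{i} \<in> null_sets M" and "loc s i = z"
  shows "sncg_value M loc S R T Z \<gamma> \<pi> j s z \<le> sncg_value M loc S R T Z \<gamma> \<pi> i s z"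
proof -
  have "\<pi> j \<in> policies A"
    using NE unfolding nash_eq_def by blast
  then have "sncg_value M loc S R T Z \<gamma> (\<pi>(i := \<pi> j)) i s z \<le> sncg_value M loc S R T Z \<gamma> \<pi> i s z"
    using NE \<open>loc s i = z\<close> unfolding nash_eq_def by blast
  then show ?thesis
    unfolding sncg_value_imitate[OF \<open>{i} \<in> null_sets M\<close>] .
qed

theorem proposition2:
  fixes M :: "'n measure" and loc :: "'s \<Rightarrow> 'n \<Rightarrow> 'z::finite"
    and A :: "'z \<Rightarrow> 'a set" and S :: "'s measure"
    and R :: "'z \<Rightarrow> 's \<Rightarrow> real \<Rightarrow> real"
    and T :: "'s \<Rightarrow> ('a \<Rightarrow> real) \<Rightarrow> 's measure"
    and Z :: "'s \<Rightarrow> 'z \<Rightarrow> 'a \<Rightarrow> 's \<Rightarrow> 'z pmf"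
    and \<gamma> :: real and \<pi> :: "'n \<Rightarrow> 'z \<Rightarrow> 's \<Rightarrow> 'a pmf"
  assumes "prob_space M"
    and nonatomic: "\<And>i. {i} \<in> sets M \<and> measure M {i} = 0"
    and "0 \<le> \<gamma>" "\<gamma> < 1"
    and "\<And>z s. antimono (R z s) \<and> continuous_on UNIV (R z s)"
    and "\<And>s x. prob_space (T s x) \<and> sets (T s x) = sets S"
    and NE: "nash_eq M loc A S R T Z \<gamma> \<pi>"
    and "loc s i = z" and "loc s j = z"
  shows "sncg_value M loc S R T Z \<gamma> \<pi> i s z = sncg_value M loc S R T Z \<gamma> \<pi> j s z"
proof -
  interpret prob_space M by fact
  have null: "{k} \<in> null_sets M" for k
    using nonatomic[of k] by (simp add: null_sets_def emeasure_eq_measure)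
  show ?thesis
    using nash_eq_value_ge[OF NE null \<open>loc s i = z\<close>, of j]
      nash_eq_value_ge[OF NE null \<open>loc s j = z\<close>, of i]
    by simp
qed

end
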